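(* Let $W,\widetilde W\in\mathbb R^{n\times m}$ and let $D,\widetilde D$ be the $n\times n$ diagonal matrices with $D_{ii}=\sum_{j=1}^n\sum_{k=1}^mW_{ik}W_{jk}$ and $\widetilde D_{ii}=\sum_{j=1}^n\sum_{k=1}^m\widetilde W_{ik}\widetilde W_{jk}$, both assumed invertible with positive diagonals. Suppose $\sup_{i,k}|W_{ik}-\widetilde W_{ik}|\le\delta$, $0\le W_{ik}\le C$ for some $C>0$, and $\inf_iD_{ii}/(mn)>\gamma$ with $\gamma>2C\delta+\delta^2$. Then both $\|D^{-1/2}W-\widetilde D^{-1/2}\widetilde W\|_2$ and $\|D^{-1/2}W-\widetilde D^{-1/2}\widetilde W\|_F$ are bounded by $$\frac{\delta}{\sqrt\gamma}+\frac{(2C\delta+\delta^2)(C+\delta)}{\gamma\sqrt{\gamma-2C\delta-\delta^2}+\sqrt\gamma(\gamma-2C\delta-\delta^2)}.$$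
   Context: $\|\cdot\|_2$ is the operator (spectral) norm and $\|\cdot\|_F$ the Frobenius norm. *)

theory Defs
  imports "HOL-Analysis.Analysis"
begin

definition deg :: "real^'m^'n \<Rightarrow> 'n \<Rightarrow> real" where
  "deg W i = (\<Sum>j\<in>UNIV. \<Sum>k\<in>UNIV. W$i$k * W$j$k)"

definition diag_mat :: "('n \<Rightarrow> real) \<Rightarrow> real^'n^'n" where
  "diag_mat d = (\<chi> i j. if i = j then d i else 0)"

definition deg_mat :: "real^'m^'n \<Rightarrow> real^'n^'n" where
  "deg_mat W = diag_mat (deg W)"

definition deg_mat_inv_sqrt :: "real^'m^'n \<Rightarrow> real^'n^'n" where
  "deg_mat_inv_sqrt W = diag_mat (\<lambda>i. 1 / sqrt (deg W i))"

definition op_norm :: "real^'m^'n \<Rightarrow> real" where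
  "op_norm A = onorm (\<lambda>x. A *v x)"

definition frob_norm :: "real^'m^'n \<Rightarrow> real" where
  "frob_norm A = sqrt (\<Sum>i\<in>UNIV. \<Sum>j\<in>UNIV. (A$i$j)^2)"

end

theory Submission imports Defs begin

text \<open>The Frobenius norm dominates the operator norm, and an \<open>n \<times> m\<close> matrix with entries bounded
by \<open>b\<close> has Frobenius norm at most \<open>sqrt (m n) b\<close>, so it suffices to bound each entry. An entry
splits as \<open>(W\<^sub>i\<^sub>k - W'\<^sub>i\<^sub>k) / sqrt D\<^sub>i\<^sub>i + W'\<^sub>i\<^sub>k (1 / sqrt D\<^sub>i\<^sub>i - 1 / sqrt D'\<^sub>i\<^sub>i)\<close>. The first term is at
most \<open>\<delta> / sqrt (m n \<gamma>)\<close>. For the second, every product \<open>W\<^sub>i\<^sub>k W\<^sub>j\<^sub>k\<close> moves by at most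
\<open>2 C \<delta> + \<delta>\<^sup>2\<close>, hence so do the normalised degrees \<open>D\<^sub>i\<^sub>i / (m n) > \<gamma>\<close>, and rationalising
\<open>1 / sqrt a - 1 / sqrt b = (b - a) / (a sqrt b + sqrt a b)\<close> bounds the difference of inverse roots.\<close>

lemma norm_matrix_eq_sqrt_sum_squares:
  fixes X :: "real^'m^'n"
  shows "norm X = sqrt (\<Sum>i\<in>UNIV. \<Sum>j\<in>UNIV. (X$i$j)^2)"
  unfolding norm_vec_def L2_set_def by (simp add: sum_nonneg)

lemma frob_norm_eq_norm: "frob_norm X = norm X"
  unfolding frob_norm_def norm_matrix_eq_sqrt_sum_squares ..

lemma norm_matrix_vector_mult_le:
  fixes A :: "real^'m^'n"
  shows "norm (A *v x) \<le> norm A * norm x"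
proof -
  have "norm (A *v x) = sqrt (\<Sum>i\<in>UNIV. ((A$i) \<bullet> x)^2)"
    unfolding norm_vec_def L2_set_def matrix_mult_dot by simp
  also have "\<dots> \<le> sqrt (\<Sum>i\<in>UNIV. (norm (A$i))^2 * (norm x)^2)"
  proof (intro real_sqrt_le_mono sum_mono)
    fix i
    have "\<bar>A$i \<bullet> x\<bar>^2 \<le> (norm (A$i) * norm x)^2"
      by (intro power_mono Cauchy_Schwarz_ineq2) simp
    then show "(A$i \<bullet> x)^2 \<le> (norm (A$i))^2 * (norm x)^2"
      by (simp add: power_mult_distrib)
  qed
  also have "\<dots> = norm A * norm x"
    unfolding norm_vec_def[of A] L2_set_def
    by (simp add: sum_distrib_right[symmetric] real_sqrt_mult)
  finally show ?thesis .
qed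

lemma op_norm_le_frob_norm:
  fixes A :: "real^'m^'n"
  shows "op_norm A \<le> frob_norm A"
  unfolding op_norm_def frob_norm_eq_norm
  by (rule onorm_le) (simp add: norm_matrix_vector_mult_le)

lemma norm_matrix_le_entrywise:
  fixes X :: "real^'m^'n"
  assumes "\<And>i k. \<bar>X$i$k\<bar> \<le> b"
  shows "norm X \<le> sqrt (real CARD('m) * real CARD('n)) * b"
proof -
  have "0 \<le> b" using assms[of undefined undefined] by linarith
  have "norm X \<le> sqrt (\<Sum>i\<in>(UNIV::'n set). \<Sum>j\<in>(UNIV::'m set). b^2)"
    unfolding norm_matrix_eq_sqrt_sum_squares
  proof (intro real_sqrt_le_mono sum_mono)
    fix i j
    show "(X$i$j)^2 \<le> b^2"
      using power_mono[OF assms[of i j], of 2] by simp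
  qed
  also have "\<dots> = sqrt (real CARD('m) * real CARD('n)) * b"
    using \<open>0 \<le> b\<close> by (simp add: real_sqrt_mult mult.commute)
  finally show ?thesis .
qed

lemma diag_mat_mult_nth: "(diag_mat d ** X)$i$k = d i * X$i$k"
proof -
  have "(diag_mat d ** X)$i$k = (\<Sum>j\<in>UNIV. (if i = j then d i else 0) * X$j$k)"
    unfolding diag_mat_def matrix_matrix_mult_def by simp
  also have "\<dots> = (\<Sum>j\<in>UNIV. if i = j then d i * X$j$k else 0)"
    by (rule sum.cong) simp_all
  finally show ?thesis by simp
qed

lemma deg_mat_inv_sqrt_mult_nth:
  "(deg_mat_inv_sqrt W ** W)$i$k = W$i$k / sqrt (deg W i)"
  unfolding deg_mat_inv_sqrt_def diag_mat_mult_nth by simp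

lemma abs_mult_diff_le:
  fixes x y u v c d :: real
  assumes "0 \<le> x" "x \<le> c" "0 \<le> y" "y \<le> c" "\<bar>x - u\<bar> \<le> d" "\<bar>y - v\<bar> \<le> d"
  shows "\<bar>x * y - u * v\<bar> \<le> 2*c*d + d^2"
proof -
  have "x * y - u * v = -(x * (v - y) + (u - x) * y + (u - x) * (v - y))"
    by (simp add: algebra_simps)
  then have "\<bar>x * y - u * v\<bar> \<le> \<bar>x * (v - y)\<bar> + \<bar>(u - x) * y\<bar> + \<bar>(u - x) * (v - y)\<bar>"
    by simp
  also have "\<dots> \<le> c * d + d * c + d * d"
    using assms unfolding abs_mult
    by (intro add_mono mult_mono) (auto simp: abs_minus_commute)
  finally show ?thesis by (simp add: power2_eq_square)
qed

lemma abs_deg_diff_le: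
  fixes W Wt :: "real^'m^'n"
  assumes "\<And>i k. 0 \<le> W$i$k \<and> W$i$k \<le> C" and "\<And>i k. \<bar>W$i$k - Wt$i$k\<bar> \<le> \<delta>"
  shows "\<bar>deg W i - deg Wt i\<bar> \<le> real CARD('m) * real CARD('n) * (2*C*\<delta> + \<delta>^2)"
proof -
  have "\<bar>deg W i - deg Wt i\<bar> = \<bar>\<Sum>j\<in>UNIV. \<Sum>k\<in>UNIV. W$i$k * W$j$k - Wt$i$k * Wt$j$k\<bar>"
    unfolding deg_def by (simp add: sum_subtractf)
  also have "\<dots> \<le> (\<Sum>j\<in>UNIV. \<Sum>k\<in>UNIV. \<bar>W$i$k * W$j$k - Wt$i$k * Wt$j$k\<bar>)"
    by (rule order_trans[OF sum_abs sum_mono[OF sum_abs]])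
  also have "\<dots> \<le> (\<Sum>j\<in>(UNIV::'n set). \<Sum>k\<in>(UNIV::'m set). 2*C*\<delta> + \<delta>^2)"
    by (intro sum_mono abs_mult_diff_le) (use assms in auto)
  finally show ?thesis by (simp add: mult_ac)
qed

lemma abs_inverse_sqrt_diff_le:
  fixes a b \<gamma> e :: real
  assumes "a > \<gamma>" "\<bar>a - b\<bar> \<le> e" "\<gamma> - e > 0"
  shows "\<bar>1 / sqrt a - 1 / sqrt b\<bar> \<le> e / (\<gamma> * sqrt (\<gamma> - e) + sqrt \<gamma> * (\<gamma> - e))"
proof -
  have "e \<ge> 0" "\<gamma> > 0" "b \<ge> \<gamma> - e" using assms by linarith+
  then have "a > 0" "b > 0" using assms by linarith+
  have rationalised: "1 / sqrt a - 1 / sqrt b = (b - a) / (a * sqrt b + sqrt a * b)"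
  proof -
    have "a * sqrt b + sqrt a * b = (sqrt a * sqrt b) * (sqrt a + sqrt b)"
      using \<open>a > 0\<close> \<open>b > 0\<close> by (simp add: algebra_simps)
    moreover have "b - a = (sqrt b - sqrt a) * (sqrt a + sqrt b)"
      using \<open>a > 0\<close> \<open>b > 0\<close> by (simp add: algebra_simps)
    moreover have "sqrt a + sqrt b > 0" using \<open>a > 0\<close> \<open>b > 0\<close> by (simp add: add_pos_pos)
    ultimately have "(b - a) / (a * sqrt b + sqrt a * b) = (sqrt b - sqrt a) / (sqrt a * sqrt b)"
      by simp
    also have "\<dots> = 1 / sqrt a - 1 / sqrt b"
      using \<open>a > 0\<close> \<open>b > 0\<close> by (simp add: field_simps)
    finally show ?thesis by simp
  qed
  have "\<gamma> * sqrt (\<gamma> - e) + sqrt \<gamma> * (\<gamma> - e) \<le> a * sqrt b + sqrt a * b"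
    using assms \<open>\<gamma> > 0\<close> \<open>b \<ge> \<gamma> - e\<close> by (intro add_mono mult_mono) auto
  moreover have "\<gamma> * sqrt (\<gamma> - e) + sqrt \<gamma> * (\<gamma> - e) > 0"
    using assms \<open>\<gamma> > 0\<close> by (simp add: add_pos_pos)
  ultimately show ?thesis
    unfolding rationalised abs_divide
    using assms(2) \<open>e \<ge> 0\<close> \<open>a > 0\<close> \<open>b > 0\<close>
    by (smt (verit, best) abs_minus_commute frac_le)
qed

lemma abs_div_sqrt_diff_le:
  fixes w wt a b C \<delta> \<gamma> e :: real
  assumes "0 \<le> w" "w \<le> C" "\<bar>w - wt\<bar> \<le> \<delta>" "a > \<gamma>" "\<bar>a - b\<bar> \<le> e" "\<gamma> - e > 0"
  shows "\<bar>w / sqrt a - wt / sqrt b\<bar>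
           \<le> \<delta> / sqrt \<gamma> + e * (C + \<delta>) / (\<gamma> * sqrt (\<gamma> - e) + sqrt \<gamma> * (\<gamma> - e))"
proof -
  have "\<gamma> > 0" "\<delta> \<ge> 0" using assms by linarith+
  have split: "w / sqrt a - wt / sqrt b = (w - wt) / sqrt a + wt * (1 / sqrt a - 1 / sqrt b)"
    by (simp add: diff_divide_distrib right_diff_distrib)
  have "\<bar>(w - wt) / sqrt a\<bar> \<le> \<delta> / sqrt \<gamma>"
    unfolding abs_divide using assms \<open>\<gamma> > 0\<close> \<open>\<delta> \<ge> 0\<close> by (intro frac_le) auto
  moreover have "\<bar>wt * (1 / sqrt a - 1 / sqrt b)\<bar>
                   \<le> (C + \<delta>) * (e / (\<gamma> * sqrt (\<gamma> - e) + sqrt \<gamma> * (\<gamma> - e)))"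
    unfolding abs_mult using assms \<open>\<delta> \<ge> 0\<close>
    by (intro mult_mono abs_inverse_sqrt_diff_le) auto
  ultimately show ?thesis
    unfolding split using abs_triangle_ineq by (fastforce simp: mult.commute intro: order_trans)
qed

lemma normalized_matrix_diff_nth_le:
  fixes W Wt :: "real^'m^'n" and \<delta> C \<gamma> :: real
  defines "N \<equiv> real CARD('m) * real CARD('n)"
    and "e \<equiv> 2*C*\<delta> + \<delta>^2"
  assumes "\<And>i k. 0 \<le> W$i$k \<and> W$i$k \<le> C" and "\<And>i k. \<bar>W$i$k - Wt$i$k\<bar> \<le> \<delta>"
    and "\<And>i. deg W i / N > \<gamma>" and "\<gamma> > e"
  shows "\<bar>(deg_mat_inv_sqrt W ** W - deg_mat_inv_sqrt Wt ** Wt)$i$k\<bar>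
           \<le> (\<delta> / sqrt \<gamma> + e * (C + \<delta>) / (\<gamma> * sqrt (\<gamma> - e) + sqrt \<gamma> * (\<gamma> - e))) / sqrt N"
proof -
  have "N > 0" unfolding N_def by simp
  define a b where "a = deg W i / N" and "b = deg Wt i / N"
  have "\<bar>a - b\<bar> \<le> e"
    using abs_deg_diff_le[OF assms(3,4), of i] \<open>N > 0\<close>
    unfolding a_def b_def N_def e_def by (simp add: diff_divide_distrib[symmetric] abs_divide field_simps)
  then have "\<bar>W$i$k / sqrt a - Wt$i$k / sqrt b\<bar>
               \<le> \<delta> / sqrt \<gamma> + e * (C + \<delta>) / (\<gamma> * sqrt (\<gamma> - e) + sqrt \<gamma> * (\<gamma> - e))"
    using assms(3-6) unfolding a_def by (intro abs_div_sqrt_diff_le) auto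
  moreover have "(deg_mat_inv_sqrt W ** W - deg_mat_inv_sqrt Wt ** Wt)$i$k
                   = (W$i$k / sqrt a - Wt$i$k / sqrt b) / sqrt N"
    using \<open>N > 0\<close> unfolding vector_minus_component deg_mat_inv_sqrt_mult_nth a_def b_def
    by (simp add: real_sqrt_divide diff_divide_distrib)
  ultimately show ?thesis
    using \<open>N > 0\<close> by (simp add: abs_divide divide_right_mono)
qed

theorem mainTheorem14:
  fixes W Wt :: "real^'m^'n" and \<delta> C \<gamma> :: real
  assumes "invertible (deg_mat W)" and "invertible (deg_mat Wt)"
    and "\<forall>i. deg W i > 0" and "\<forall>i. deg Wt i > 0"
    and "(SUP p\<in>UNIV. \<bar>W $ fst p $ snd p - Wt $ fst p $ snd p\<bar>) \<le> \<delta>"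
    and "C > 0" and "\<forall>i k. 0 \<le> W$i$k \<and> W$i$k \<le> C"
    and "(INF i\<in>UNIV. deg W i / (real CARD('m) * real CARD('n))) > \<gamma>"
    and "\<gamma> > 2*C*\<delta> + \<delta>^2"
  shows "op_norm (deg_mat_inv_sqrt W ** W - deg_mat_inv_sqrt Wt ** Wt)
           \<le> \<delta> / sqrt \<gamma> + (2*C*\<delta> + \<delta>^2) * (C + \<delta>) /
              (\<gamma> * sqrt (\<gamma> - 2*C*\<delta> - \<delta>^2) + sqrt \<gamma> * (\<gamma> - 2*C*\<delta> - \<delta>^2))
       \<and> frob_norm (deg_mat_inv_sqrt W ** W - deg_mat_inv_sqrt Wt ** Wt)
           \<le> \<delta> / sqrt \<gamma> + (2*C*\<delta> + \<delta>^2) * (C + \<delta>) /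
              (\<gamma> * sqrt (\<gamma> - 2*C*\<delta> - \<delta>^2) + sqrt \<gamma> * (\<gamma> - 2*C*\<delta> - \<delta>^2))"
proof -
  define N where "N = real CARD('m) * real CARD('n)"
  have entry_close: "\<bar>W$i$k - Wt$i$k\<bar> \<le> \<delta>" for i k
    using cSUP_upper[where x="(i, k)" and A=UNIV and f="\<lambda>p. \<bar>W $ fst p $ snd p - Wt $ fst p $ snd p\<bar>"] assms(5)
    by (simp add: bdd_above_finite)
  have deg_large: "deg W i / N > \<gamma>" for i
    using cINF_lower[where x=i and A=UNIV and f="\<lambda>i. deg W i / N"] assms(8)
    by (simp add: bdd_below_finite N_def)
  have "frob_norm (deg_mat_inv_sqrt W ** W - deg_mat_inv_sqrt Wt ** Wt)
          \<le> sqrt N * ((\<delta> / sqrt \<gamma> + (2*C*\<delta> + \<delta>^2) * (C + \<delta>) /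
              (\<gamma> * sqrt (\<gamma> - (2*C*\<delta> + \<delta>^2)) + sqrt \<gamma> * (\<gamma> - (2*C*\<delta> + \<delta>^2)))) / sqrt N)"
    unfolding frob_norm_eq_norm N_def
    by (intro norm_matrix_le_entrywise normalized_matrix_diff_nth_le)
      (use assms(7,9) entry_close deg_large in \<open>auto simp: N_def\<close>)
  moreover have "N > 0" unfolding N_def by simp
  ultimately have "frob_norm (deg_mat_inv_sqrt W ** W - deg_mat_inv_sqrt Wt ** Wt)
           \<le> \<delta> / sqrt \<gamma> + (2*C*\<delta> + \<delta>^2) * (C + \<delta>) /
              (\<gamma> * sqrt (\<gamma> - 2*C*\<delta> - \<delta>^2) + sqrt \<gamma> * (\<gamma> - 2*C*\<delta> - \<delta>^2))"
    by (simp add: diff_diff_eq)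
  then show ?thesis using op_norm_le_frob_norm order_trans by blast
qed

end
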